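(* Let $M=(Q,c_1,c_2)$ be a Minsky machine with instruction sequence $Q=(q_1,\dots,q_N)$, and let $T_{\mathrm{comp}}$ be the product transition system over variables $\{pc,x,z_1,z_2,y_1,y_2,c_1,c_2,q\}$ with $\mathit{Init}_{\mathrm{comp}} := \mathit{Init}\wedge c_1=0\wedge c_2=0\wedge q=1$ and $\mathit{TR}_{\mathrm{comp}} := q\neq N\wedge \mathit{TR}\wedge \mathit{TR}_M$, where $\mathit{Init},\mathit{TR}$ are those of $T_{\mathrm{Prog}}$ and $\mathit{TR}_M$ is the QFLIA formula over $\{c_1,c_2,q,c_1',c_2',q'\}$ encoding one step of $M$ (as a disjunction over $j\in\{1,\dots,N-1\}$ of $q=j$ conjoined with the effect of instruction $q_j$). In each step the product thus performs one step of $T_{\mathrm{Prog}}$ and one step of $M$ simultaneously, and it has no transitions once $M$ is at its halting instruction $q_N$. Let $P := (pc=\mathrm{end})\to(y_2=2y_1)$. Then $T_{\mathrm{comp}}$ has an inductive invariant that is a QFLIA formula over its variables if and only if $M$ halts (i.e., the run of $M$ from $c_1=c_2=0$ at instruction $q_1$ reaches $q_N$).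
   Context: QFLIA (quantifier-free linear integer arithmetic) formulas are built from integer-valued variables, integer constants, addition, multiplication by integer constants, the relations $=,<,\le$, and Boolean connectives, with no quantifiers; all variables range over $\mathbb{Z}$. A transition system is a tuple $T=(V,\mathit{Init},\mathit{TR})$ where $V$ is a finite set of integer variables, $\mathit{Init}$ is a QFLIA formula over $V$, and $\mathit{TR}$ is a QFLIA formula over $V\uplus V'$, where $V'=\{v' : v\in V\}$ is a primed copy of $V$. A state is an assignment $V\to\mathbb{Z}$. The initial states are those satisfying $\mathit{Init}$. A pair of states $(s,t)$ is a transition if $\mathit{TR}$ holds when unprimed variables take their values from $s$ and primed variables from $t$. Reachable states are those reachable from an initial state by finitely many transitions. A safety property is a QFLIA formula $P$ over $V$. We write $T\models P$ if every reachable state satisfies $P$. An inductive invariant for $T$ and $P$ is a formula $I$ over $V$ such that: (i) $\mathit{Init}\to I$ is valid; (ii) $I\wedge \mathit{TR}\to I'$ is valid, where $I'$ is obtained from $I$ by replacing each $v\in V$ with $v'$; and (iii) $I\to P$ is valid. A Minsky (2-counter) machine $M=(Q,c_1,c_2)$ has two counters $c_1,c_2$ ranging over $\mathbb{N}$, both initially $0$, and a finite instruction sequence $Q=(q_1,\dots,q_N)$, where $q_1$ is the first instruction and $q_N$ is the halting instruction. Each other instruction is one of: $i_k$ (increment $c_k$), $d_k$ (decrement $c_k$; if $c_k=0$ it stays $0$), or $t_k(j)$ (if $c_k=0$ go to instruction $j$). After each instruction control passes to the next instruction, except when a test $t_k(j)$ finds $c_k=0$, in which case control passes to instruction $j$.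 The transition system $T_{\mathrm{Prog}}$ has variables $pc,x,z_1,z_2,y_1,y_2$, with locations encoded as integers $\mathrm{start}=0$, $\mathrm{loop}_1=1$, $\mathrm{loop}_2=2$, $\mathrm{end}=3$. Its initial formula is $\mathit{Init} := pc=\mathrm{start}\wedge x>0\wedge z_1=x\wedge z_2=2x\wedge y_1=0\wedge y_2=0$. Its transition formula $\mathit{TR}$ is the disjunction of the following cases, where in each case every variable of $T_{\mathrm{Prog}}$ not mentioned keeps its value: (1) $pc\in\{\mathrm{start},\mathrm{loop}_1\}\wedge z_1>0\wedge pc'=\mathrm{loop}_1\wedge z_1'=z_1-1\wedge y_1'=y_1+x$; (2) $pc\in\{\mathrm{start},\mathrm{loop}_1\}\wedge z_1\le 0\wedge pc'=\mathrm{loop}_2$; (3) $pc=\mathrm{loop}_2\wedge z_2>0\wedge pc'=\mathrm{loop}_2\wedge z_2'=z_2-1\wedge y_2'=y_2+x$; (4) $pc=\mathrm{loop}_2\wedge z_2\le 0\wedge pc'=\mathrm{end}$; (5) $pc=\mathrm{end}\wedge pc'=\mathrm{end}$. This encodes the program that, on input $x>0$, adds $x$ to $y_1$ exactly $x$ times, then adds $x$ to $y_2$ exactly $2x$ times, and then stays at $\mathrm{end}$. *)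

theory Defs
  imports Main
begin

datatype 'v lterm =
    LVar 'v
  | LConst int
  | LAdd "'v lterm" "'v lterm"
  | LMul int "'v lterm"

datatype 'v qf =
    FTrue
  | FFalse
  | FEq "'v lterm" "'v lterm"
  | FLt "'v lterm" "'v lterm"
  | FLe "'v lterm" "'v lterm"
  | FNot "'v qf"
  | FAnd "'v qf" "'v qf"
  | FOr "'v qf" "'v qf"

primrec tval :: "('v \<Rightarrow> int) \<Rightarrow> 'v lterm \<Rightarrow> int" where
  "tval s (LVar v) = s v"
| "tval s (LConst c) = c"
| "tval s (LAdd a b) = tval s a + tval s b"
| "tval s (LMul c a) = c * tval s a"

primrec holds :: "('v \<Rightarrow> int) \<Rightarrow> 'v qf \<Rightarrow> bool" where
  "holds s FTrue = True"
| "holds s FFalse = False"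
| "holds s (FEq a b) = (tval s a = tval s b)"
| "holds s (FLt a b) = (tval s a < tval s b)"
| "holds s (FLe a b) = (tval s a \<le> tval s b)"
| "holds s (FNot f) = (\<not> holds s f)"
| "holds s (FAnd f g) = (holds s f \<and> holds s g)"
| "holds s (FOr f g) = (holds s f \<or> holds s g)"

definition FImp :: "'v qf \<Rightarrow> 'v qf \<Rightarrow> 'v qf" where
  "FImp f g = FOr (FNot f) g"

fun FOrs :: "'v qf list \<Rightarrow> 'v qf" where
  "FOrs [] = FFalse"
| "FOrs (f # fs) = FOr f (FOrs fs)"

definition valid :: "'v qf \<Rightarrow> bool" where
  "valid f \<longleftrightarrow> (\<forall>s. holds s f)"

text \<open>Variables of \<open>V \<uplus> V'\<close>: \<open>Cur v\<close> is \<open>v\<close>, \<open>Nxt v\<close> is \<open>v'\<close>.\<close>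
datatype 'v primed = Cur 'v | Nxt 'v

text \<open>A transition system is given by \<open>Init\<close> (over \<open>V\<close>) and \<open>TR\<close> (over \<open>V \<uplus> V'\<close>);
  \<open>V\<close> is the (finite) variable type \<open>'v\<close>.\<close>
definition inductive_invariant :: "'v qf \<Rightarrow> 'v primed qf \<Rightarrow> 'v qf \<Rightarrow> 'v qf \<Rightarrow> bool" where
  "inductive_invariant Init TR P I \<longleftrightarrow>
     valid (FImp Init I) \<and>
     valid (FImp (FAnd (map_qf Cur I) TR) (map_qf Nxt I)) \<and>
     valid (FImp I P)"

datatype var = PC | X | Z1 | Z2 | Y1 | Y2 | C1 | C2 | Q

abbreviation cv :: "var \<Rightarrow> var primed lterm" where "cv v \<equiv> LVar (Cur v)"
abbreviation nv :: "var \<Rightarrow> var primed lterm" where "nv v \<equiv> LVar (Nxt v)"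
abbreviation uv :: "var \<Rightarrow> var lterm" where "uv v \<equiv> LVar v"
abbreviation ic :: "int \<Rightarrow> 'v lterm" where "ic c \<equiv> LConst c"

text \<open>Locations: start = 0, loop1 = 1, loop2 = 2, end = 3.\<close>

definition Init_prog :: "var qf" where
  "Init_prog =
     FAnd (FEq (uv PC) (ic 0))
    (FAnd (FLt (ic 0) (uv X))
    (FAnd (FEq (uv Z1) (uv X))
    (FAnd (FEq (uv Z2) (LMul 2 (uv X)))
    (FAnd (FEq (uv Y1) (ic 0))
          (FEq (uv Y2) (ic 0))))))"

abbreviation keep :: "var \<Rightarrow> var primed qf" where
  "keep v \<equiv> FEq (nv v) (cv v)"

definition TR_prog :: "var primed qf" where
  "TR_prog = FOrs [
     \<comment> \<open>(1)\<close>
     FAnd (FOr (FEq (cv PC) (ic 0)) (FEq (cv PC) (ic 1)))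
    (FAnd (FLt (ic 0) (cv Z1))
    (FAnd (FEq (nv PC) (ic 1))
    (FAnd (FEq (nv Z1) (LAdd (cv Z1) (ic (-1))))
    (FAnd (FEq (nv Y1) (LAdd (cv Y1) (cv X)))
    (FAnd (keep X) (FAnd (keep Z2) (keep Y2))))))),
     \<comment> \<open>(2)\<close>
     FAnd (FOr (FEq (cv PC) (ic 0)) (FEq (cv PC) (ic 1)))
    (FAnd (FLe (cv Z1) (ic 0))
    (FAnd (FEq (nv PC) (ic 2))
    (FAnd (keep X) (FAnd (keep Z1) (FAnd (keep Z2) (FAnd (keep Y1) (keep Y2))))))),
     \<comment> \<open>(3)\<close>
     FAnd (FEq (cv PC) (ic 2))
    (FAnd (FLt (ic 0) (cv Z2))
    (FAnd (FEq (nv PC) (ic 2))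
    (FAnd (FEq (nv Z2) (LAdd (cv Z2) (ic (-1))))
    (FAnd (FEq (nv Y2) (LAdd (cv Y2) (cv X)))
    (FAnd (keep X) (FAnd (keep Z1) (keep Y1))))))),
     \<comment> \<open>(4)\<close>
     FAnd (FEq (cv PC) (ic 2))
    (FAnd (FLe (cv Z2) (ic 0))
    (FAnd (FEq (nv PC) (ic 3))
    (FAnd (keep X) (FAnd (keep Z1) (FAnd (keep Z2) (FAnd (keep Y1) (keep Y2))))))),
     \<comment> \<open>(5)\<close>
     FAnd (FEq (cv PC) (ic 3))
    (FAnd (FEq (nv PC) (ic 3))
    (FAnd (keep X) (FAnd (keep Z1) (FAnd (keep Z2) (FAnd (keep Y1) (keep Y2))))))]"

datatype ctr = K1 | K2

text \<open>Non-halting instructions: increment, decrement, test-for-zero-and-jump.\<close>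
datatype instr = Inc ctr | Dec ctr | Tst ctr nat

text \<open>A Minsky machine \<open>Q = (q_1,\<dots>,q_N)\<close> is represented by the list \<open>[q_1,\<dots>,q_{N-1}]\<close>
  of its non-halting instructions; \<open>q_N\<close> is the halting instruction, \<open>N = length + 1\<close>.\<close>
type_synonym minsky = "instr list"

definition mN :: "minsky \<Rightarrow> nat" where
  "mN M = length M + 1"

definition wf_minsky :: "minsky \<Rightarrow> bool" where
  "wf_minsky M \<longleftrightarrow> (\<forall>i < length M. \<forall>k j. M ! i = Tst k j \<longrightarrow> 1 \<le> j \<and> j \<le> mN M)"

fun getc :: "ctr \<Rightarrow> nat \<times> nat \<Rightarrow> nat" where
  "getc K1 (a, b) = a"
| "getc K2 (a, b) = b"

fun updc :: "ctr \<Rightarrow> nat \<Rightarrow> nat \<times> nat \<Rightarrow> nat \<times> nat" where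
  "updc K1 v (a, b) = (v, b)"
| "updc K2 v (a, b) = (a, v)"

text \<open>Configurations \<open>(current instruction index, (c_1, c_2))\<close>; one step of \<open>M\<close>.\<close>
definition minsky_step :: "minsky \<Rightarrow> nat \<times> (nat \<times> nat) \<Rightarrow> nat \<times> (nat \<times> nat) \<Rightarrow> bool" where
  "minsky_step M cf cf' \<longleftrightarrow>
     (let (q, c) = cf in
      1 \<le> q \<and> q < mN M \<and>
      (case M ! (q - 1) of
         Inc k \<Rightarrow> cf' = (q + 1, updc k (getc k c + 1) c)
       | Dec k \<Rightarrow> cf' = (q + 1, updc k (getc k c - 1) c)
       | Tst k j \<Rightarrow> cf' = (if getc k c = 0 then j else q + 1, c)))"

definition halts :: "minsky \<Rightarrow> bool" where
  "halts M \<longleftrightarrow> (\<exists>c. (minsky_step M)\<^sup>*\<^sup>* (1, (0, 0)) (mN M, c))"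

fun cvar :: "ctr \<Rightarrow> var" where
  "cvar K1 = C1"
| "cvar K2 = C2"

fun other :: "ctr \<Rightarrow> ctr" where
  "other K1 = K2"
| "other K2 = K1"

fun instr_fml :: "nat \<Rightarrow> instr \<Rightarrow> var primed qf" where
  "instr_fml j (Inc k) =
     FAnd (FEq (nv (cvar k)) (LAdd (cv (cvar k)) (ic 1)))
    (FAnd (keep (cvar (other k)))
          (FEq (nv Q) (ic (int j + 1))))"
| "instr_fml j (Dec k) =
     FAnd (FOr (FAnd (FEq (cv (cvar k)) (ic 0)) (FEq (nv (cvar k)) (ic 0)))
               (FAnd (FNot (FEq (cv (cvar k)) (ic 0))) (FEq (nv (cvar k)) (LAdd (cv (cvar k)) (ic (-1))))))
    (FAnd (keep (cvar (other k)))
          (FEq (nv Q) (ic (int j + 1))))"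
| "instr_fml j (Tst k t) =
     FAnd (FOr (FAnd (FEq (cv (cvar k)) (ic 0)) (FEq (nv Q) (ic (int t))))
               (FAnd (FNot (FEq (cv (cvar k)) (ic 0))) (FEq (nv Q) (ic (int j + 1)))))
    (FAnd (keep C1) (keep C2))"

definition TR_M :: "minsky \<Rightarrow> var primed qf" where
  "TR_M M = FOrs (map (\<lambda>j. FAnd (FEq (cv Q) (ic (int j))) (instr_fml j (M ! (j - 1)))) [1..<mN M])"

definition Init_comp :: "var qf" where
  "Init_comp = FAnd Init_prog (FAnd (FEq (uv C1) (ic 0)) (FAnd (FEq (uv C2) (ic 0)) (FEq (uv Q) (ic 1))))"

definition TR_comp :: "minsky \<Rightarrow> var primed qf" where
  "TR_comp M = FAnd (FNot (FEq (cv Q) (ic (int (mN M))))) (FAnd TR_prog (TR_M M))"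

definition P_prop :: "var qf" where
  "P_prop = FImp (FEq (uv PC) (ic 3)) (FEq (uv Y2) (LMul 2 (uv Y1)))"

end

theory Submission
  imports Defs
begin

text \<open>
  If \<open>M\<close> halts after \<open>n\<close> steps, the product system runs for at most \<open>n\<close> steps, and the
  states reachable in exactly \<open>k\<close> steps are QFLIA-definable: for inputs \<open>x \<ge> k\<close> they are the
  states of the first loop with \<open>Z1 = X - k\<close> and \<open>Y1 = k X\<close>, and the finitely many inputs
  \<open>x < k\<close> can be listed. The disjunction over \<open>k \<le> n\<close> is an inductive invariant.

  If \<open>M\<close> does not halt, an inductive invariant \<open>I\<close> contains every reachable state, in particular
  the state \<open>G k x\<close> after \<open>k \<le> x\<close> steps on input \<open>x\<close>. It contains no state \<open>B k x\<close>
  obtained from \<open>G k x\<close> by increasing \<open>Y1\<close> by one, since running the program from there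
  violates \<open>P\<close>. But \<open>G k x\<close> is affine in \<open>x\<close> with slope \<open>\<alpha> + k \<beta>\<close>, where \<open>\<beta>\<close> is
  the indicator of \<open>Y1\<close>, and \<open>B k x = G k x + \<beta>\<close>. So every term of \<open>I\<close> takes values
  \<open>(a + k b) x + c\<^sub>k\<close> and \<open>(a + k b) x + c\<^sub>k + b\<close> on them, whose signs agree for large
  \<open>x\<close> unless \<open>a + k b = 0\<close>, which happens for at most one \<open>k\<close>. Hence for all but finitely
  many \<open>k\<close> the formula \<open>I\<close> cannot separate \<open>G k x\<close> from \<open>B k x\<close> for large \<open>x\<close>, a
  contradiction.
\<close>

section \<open>QFLIA semantics\<close>

lemma tval_map_lterm [simp]: "tval s (map_lterm f t) = tval (\<lambda>v. s (f v)) t"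
  by (induction t) auto

lemma holds_map_qf [simp]: "holds s (map_qf f \<phi>) = holds (\<lambda>v. s (f v)) \<phi>"
  by (induction \<phi>) auto

lemma holds_FOrs [simp]: "holds s (FOrs \<phi>s) \<longleftrightarrow> (\<exists>\<phi>\<in>set \<phi>s. holds s \<phi>)"
  by (induction \<phi>s) auto

lemma holds_FImp [simp]: "holds s (FImp \<phi> \<psi>) \<longleftrightarrow> (holds s \<phi> \<longrightarrow> holds s \<psi>)"
  by (simp add: FImp_def)

lemma inductive_invariant_iff:
  "inductive_invariant Init TR P I \<longleftrightarrow>
     (\<forall>s. holds s Init \<longrightarrow> holds s I) \<and>
     (\<forall>s t. holds s I \<longrightarrow> holds (case_primed s t) TR \<longrightarrow> holds t I) \<and>
     (\<forall>s. holds s I \<longrightarrow> holds s P)"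
proof -
  have "valid (FImp (FAnd (map_qf Cur I) TR) (map_qf Nxt I)) \<longleftrightarrow>
      (\<forall>s t. holds s I \<longrightarrow> holds (case_primed s t) TR \<longrightarrow> holds t I)"
  proof
    assume "valid (FImp (FAnd (map_qf Cur I) TR) (map_qf Nxt I))"
    then have "holds (case_primed s t) (FImp (FAnd (map_qf Cur I) TR) (map_qf Nxt I))" for s t
      unfolding valid_def by blast
    then show "\<forall>s t. holds s I \<longrightarrow> holds (case_primed s t) TR \<longrightarrow> holds t I"
      by simp
  next
    assume step: "\<forall>s t. holds s I \<longrightarrow> holds (case_primed s t) TR \<longrightarrow> holds t I"
    show "valid (FImp (FAnd (map_qf Cur I) TR) (map_qf Nxt I))"
      unfolding valid_def
    proof
      fix u :: "'a primed \<Rightarrow> int"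
      have "case_primed (\<lambda>v. u (Cur v)) (\<lambda>v. u (Nxt v)) = u"
        by (rule ext) (simp split: primed.split)
      with step[rule_format, of "\<lambda>v. u (Cur v)" "\<lambda>v. u (Nxt v)"]
      show "holds u (FImp (FAnd (map_qf Cur I) TR) (map_qf Nxt I))"
        by simp
    qed
  qed
  then show ?thesis
    unfolding inductive_invariant_def valid_def by simp
qed

definition tval_lin :: "('v \<Rightarrow> int) \<Rightarrow> 'v lterm \<Rightarrow> int" where
  "tval_lin f t = tval f t - tval (\<lambda>_. 0) t"

lemma tval_affine: "tval (\<lambda>v. a * f v + g v) t = a * tval_lin f t + tval g t"
  by (induction t) (auto simp: tval_lin_def distrib_left right_diff_distrib mult.left_commute)

lemma eventually_sgn_affine:
  fixes A c :: int
  assumes "A \<noteq> 0"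
  shows "\<forall>\<^sub>F x in at_top. sgn (x * A + c) = sgn A"
  unfolding eventually_at_top_linorder
proof (intro exI allI impI)
  fix x :: int
  assume x: "\<bar>c\<bar> + 1 \<le> x"
  then have "0 < x"
    by linarith
  show "sgn (x * A + c) = sgn A"
  proof (cases "0 < A")
    case True
    with \<open>0 < x\<close> have "x \<le> x * A"
      by (simp add: mult_le_cancel_left1)
    with x True show ?thesis
      by (simp add: sgn_if)
  next
    case False
    with assms have "A \<le> - 1"
      by linarith
    with \<open>0 < x\<close> have "x * A \<le> - x"
      using mult_left_mono[of A "- 1" x] by simp
    then have "x * A + c < 0"
      using x abs_ge_self[of c] by linarith
    with False assms show ?thesis
      by (simp add: sgn_if)
  qed
qed

lemma cofinite_eventually_sgn_shift:
  fixes a b :: int and c :: "nat \<Rightarrow> int"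
  shows "\<forall>\<^sub>F k in cofinite. \<forall>\<^sub>F x in at_top.
    sgn (x * (a + int k * b) + c k + b) = sgn (x * (a + int k * b) + c k)"
proof -
  have "{k. a + int k * b = 0 \<and> b \<noteq> 0} \<subseteq> {nat (- a div b)}"
  proof
    fix k
    assume "k \<in> {k. a + int k * b = 0 \<and> b \<noteq> 0}"
    then have "- a = int k * b" "b \<noteq> 0"
      by auto
    then show "k \<in> {nat (- a div b)}"
      by simp
  qed
  then have finite: "finite {k. a + int k * b = 0 \<and> b \<noteq> 0}"
    by (rule finite_subset) simp
  have eventually: "\<forall>\<^sub>F x in at_top. sgn (x * (a + int k * b) + c k + b) = sgn (x * (a + int k * b) + c k)"
    if "a + int k * b \<noteq> 0 \<or> b = 0" for k
    using that
  proof
    assume "a + int k * b \<noteq> 0"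
    from eventually_sgn_affine[OF this, of "c k + b"] eventually_sgn_affine[OF this, of "c k"]
    show ?thesis
      by eventually_elim (simp add: add.assoc)
  qed simp
  show ?thesis
    unfolding eventually_cofinite using eventually by (auto intro: finite_subset[OF _ finite])
qed

lemma cofinite_eventually_holds_shift:
  fixes \<alpha> \<beta> :: "'v \<Rightarrow> int" and \<gamma> :: "nat \<Rightarrow> 'v \<Rightarrow> int"
  shows "\<forall>\<^sub>F k in cofinite. \<forall>\<^sub>F x in at_top.
    holds (\<lambda>v. x * (\<alpha> v + int k * \<beta> v) + \<gamma> k v + \<beta> v) \<phi> \<longleftrightarrow>
    holds (\<lambda>v. x * (\<alpha> v + int k * \<beta> v) + \<gamma> k v) \<phi>"
proof -
  let ?s = "\<lambda>k x v. x * (\<alpha> v + int k * \<beta> v) + \<gamma> k v"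
  have tval_s: "tval (?s k x) t = x * (tval_lin \<alpha> t + int k * tval_lin \<beta> t) + tval (\<gamma> k) t" for k x t
  proof -
    have "tval_lin (\<lambda>v. \<alpha> v + int k * \<beta> v) t = tval_lin \<alpha> t + int k * tval_lin \<beta> t"
      using tval_affine[of "int k" \<beta> \<alpha> t] by (simp add: tval_lin_def add.commute)
    then show ?thesis
      using tval_affine[of x "\<lambda>v. \<alpha> v + int k * \<beta> v" "\<gamma> k" t] by simp
  qed
  have tval_shift: "tval (\<lambda>v. ?s k x v + \<beta> v) t = tval (?s k x) t + tval_lin \<beta> t" for k x t
    using tval_affine[of 1 \<beta> "?s k x" t] by (simp add: add.commute)
  have sgn_term: "\<forall>\<^sub>F k in cofinite. \<forall>\<^sub>F x in at_top.
      sgn (tval (\<lambda>v. ?s k x v + \<beta> v) t) = sgn (tval (?s k x) t)" for t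
    unfolding tval_shift tval_s by (rule cofinite_eventually_sgn_shift)
  have sgn_atom: "holds s (FEq t u) = holds s' (FEq t u) \<and> holds s (FLt t u) = holds s' (FLt t u) \<and>
      holds s (FLe t u) = holds s' (FLe t u)"
    if "sgn (tval s (LAdd t (LMul (- 1) u))) = sgn (tval s' (LAdd t (LMul (- 1) u)))" for s s' t u
    using that by (auto simp: sgn_if split: if_splits)
  show ?thesis
  proof (induction \<phi>)
    case (FEq t u)
    show ?case
      using sgn_term[of "LAdd t (LMul (- 1) u)"]
      by (elim eventually_mono) (use sgn_atom in blast)
  next
    case (FLt t u)
    show ?case
      using sgn_term[of "LAdd t (LMul (- 1) u)"]
      by (elim eventually_mono) (use sgn_atom in blast)
  next
    case (FLe t u)
    show ?case
      using sgn_term[of "LAdd t (LMul (- 1) u)"]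
      by (elim eventually_mono) (use sgn_atom in blast)
  next
    case (FAnd \<phi> \<psi>)
    from eventually_conj[OF FAnd.IH] show ?case
      by (rule eventually_mono) (auto elim: eventually_elim2)
  next
    case (FOr \<phi> \<psi>)
    from eventually_conj[OF FOr.IH] show ?case
      by (rule eventually_mono) (auto elim: eventually_elim2)
  qed simp_all
qed

section \<open>The program\<close>

definition prog_step :: "(var \<Rightarrow> int) \<Rightarrow> var \<Rightarrow> int" where
  "prog_step p =
     (if p PC = 0 \<or> p PC = 1 then
        if 0 < p Z1 then p(PC := 1, Z1 := p Z1 - 1, Y1 := p Y1 + p X) else p(PC := 2)
      else if p PC = 2 then
        if 0 < p Z2 then p(Z2 := p Z2 - 1, Y2 := p Y2 + p X) else p(PC := 3)
      else p)"

lemma holds_TR_prog: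
  assumes "0 \<le> s PC" "s PC \<le> 3"
  shows "holds (case_primed s t) TR_prog \<longleftrightarrow> (\<forall>v\<in>{PC, X, Z1, Z2, Y1, Y2}. t v = prog_step s v)"
proof
  assume "holds (case_primed s t) TR_prog"
  then show "\<forall>v\<in>{PC, X, Z1, Z2, Y1, Y2}. t v = prog_step s v"
    unfolding TR_prog_def prog_step_def by auto
next
  assume step: "\<forall>v\<in>{PC, X, Z1, Z2, Y1, Y2}. t v = prog_step s v"
  consider "s PC = 0 \<or> s PC = 1" "0 < s Z1" | "s PC = 0 \<or> s PC = 1" "s Z1 \<le> 0"
    | "s PC = 2" "0 < s Z2" | "s PC = 2" "s Z2 \<le> 0" | "s PC = 3"
    using assms by linarith
  then show "holds (case_primed s t) TR_prog"
    using step unfolding TR_prog_def by cases (auto simp: prog_step_def)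
qed

lemma prog_step_PC_range: "0 \<le> p PC \<Longrightarrow> p PC \<le> 3 \<Longrightarrow> 0 \<le> prog_step p PC \<and> prog_step p PC \<le> 3"
  by (auto simp: prog_step_def)

definition prog_init :: "int \<Rightarrow> var \<Rightarrow> int" where
  "prog_init x = (\<lambda>v. case v of PC \<Rightarrow> 0 | X \<Rightarrow> x | Z1 \<Rightarrow> x | Z2 \<Rightarrow> 2 * x | _ \<Rightarrow> 0)"

definition prog_run :: "int \<Rightarrow> nat \<Rightarrow> var \<Rightarrow> int" where
  "prog_run x k = (prog_step ^^ k) (prog_init x)"

lemma prog_run_0 [simp]: "prog_run x 0 = prog_init x"
  by (simp add: prog_run_def)

lemma prog_run_Suc: "prog_run x (Suc k) = prog_step (prog_run x k)"
  by (simp add: prog_run_def)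

lemma prog_run_add: "(prog_step ^^ m) (prog_run x k) = prog_run x (k + m)"
  by (induction m) (simp_all add: prog_run_Suc)

definition prog_inv :: "(var \<Rightarrow> int) \<Rightarrow> bool" where
  "prog_inv p \<longleftrightarrow> 0 < p X \<and> 0 \<le> p PC \<and> p PC \<le> 3 \<and>
     (p PC \<le> 1 \<longrightarrow> 0 \<le> p Z1 \<and> p Y1 = (p X - p Z1) * p X \<and> p Z2 = 2 * p X \<and> p Y2 = 0) \<and>
     (p PC = 2 \<longrightarrow> p Y1 = p X * p X \<and> 0 \<le> p Z2 \<and> p Y2 = (2 * p X - p Z2) * p X) \<and>
     (p PC = 3 \<longrightarrow> p Y1 = p X * p X \<and> p Y2 = 2 * p X * p X)"

lemma prog_inv_prog_step: "prog_inv p \<Longrightarrow> prog_inv (prog_step p)"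
  unfolding prog_inv_def prog_step_def by (auto simp: algebra_simps)

lemma prog_inv_prog_run: "1 \<le> x \<Longrightarrow> prog_inv (prog_run x k)"
  by (induction k) (simp_all add: prog_run_Suc prog_inv_prog_step, simp add: prog_inv_def prog_init_def)

definition prog_rank :: "(var \<Rightarrow> int) \<Rightarrow> int" where
  "prog_rank p = (if p PC \<le> 1 then p Z1 + p Z2 + 2 else if p PC = 2 then p Z2 + 1 else 0)"

lemma prog_terminates:
  assumes "prog_inv p"
  shows "\<exists>m. (prog_step ^^ m) p PC = 3"
  using assms
proof (induction "nat (prog_rank p)" arbitrary: p)
  case 0
  then have "p PC = 3"
    by (auto simp: prog_inv_def prog_rank_def split: if_splits)
  then show ?case
    by (metis funpow_0)
next
  case (Suc n)
  show ?case
  proof (cases "p PC = 3")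
    case True
    then show ?thesis
      by (metis funpow_0)
  next
    case False
    with Suc.prems Suc.hyps(2) have "n = nat (prog_rank (prog_step p))"
      by (auto simp: prog_inv_def prog_rank_def prog_step_def)
    then obtain m where "(prog_step ^^ m) (prog_step p) PC = 3"
      using Suc.hyps(1) Suc.prems prog_inv_prog_step by blast
    then show ?thesis
      by (metis funpow_Suc_right comp_apply)
  qed
qed

definition loop1_state :: "int \<Rightarrow> nat \<Rightarrow> var \<Rightarrow> int" where
  "loop1_state x k = (\<lambda>v. case v of
     PC \<Rightarrow> if k = 0 then 0 else 1 | X \<Rightarrow> x | Z1 \<Rightarrow> x - int k | Z2 \<Rightarrow> 2 * x | Y1 \<Rightarrow> int k * x | _ \<Rightarrow> 0)"

lemma prog_run_loop1_state: "int k \<le> x \<Longrightarrow> prog_run x k = loop1_state x k"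
proof (induction k)
  case 0
  then show ?case
    by (auto simp: prog_init_def loop1_state_def split: var.split)
next
  case (Suc k)
  then show ?case
    by (auto simp: prog_run_Suc prog_step_def loop1_state_def algebra_simps split: var.split)
qed

definition bump_Y1 :: "(var \<Rightarrow> int) \<Rightarrow> var \<Rightarrow> int" where
  "bump_Y1 p = p(Y1 := p Y1 + 1)"

lemma funpow_prog_step_bump_Y1: "(prog_step ^^ m) (bump_Y1 p) = bump_Y1 ((prog_step ^^ m) p)"
proof (induction m)
  case (Suc m)
  have "prog_step (bump_Y1 q) = bump_Y1 (prog_step q)" for q
    by (auto simp: prog_step_def bump_Y1_def fun_eq_iff)
  with Suc show ?case
    by simp
qed simp

lemma funpow_prog_step_PC_range:
  "0 \<le> p PC \<Longrightarrow> p PC \<le> 3 \<Longrightarrow> 0 \<le> (prog_step ^^ m) p PC \<and> (prog_step ^^ m) p PC \<le> 3"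
  by (induction m) (simp_all add: prog_step_PC_range)

section \<open>Minsky machines\<close>

definition minsky_next :: "minsky \<Rightarrow> nat \<times> nat \<times> nat \<Rightarrow> nat \<times> nat \<times> nat" where
  "minsky_next M cf =
     (let (q, c) = cf in
      if 1 \<le> q \<and> q < mN M then
        (case M ! (q - 1) of
           Inc k \<Rightarrow> (q + 1, updc k (getc k c + 1) c)
         | Dec k \<Rightarrow> (q + 1, updc k (getc k c - 1) c)
         | Tst k j \<Rightarrow> (if getc k c = 0 then j else q + 1, c))
      else cf)"

lemma minsky_step_iff: "minsky_step M cf cf' \<longleftrightarrow> 1 \<le> fst cf \<and> fst cf < mN M \<and> cf' = minsky_next M cf"
  unfolding minsky_step_def minsky_next_def by (cases cf) (auto split: instr.splits)

definition minsky_run :: "minsky \<Rightarrow> nat \<Rightarrow> nat \<times> nat \<times> nat" where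
  "minsky_run M k = (minsky_next M ^^ k) (1, 0, 0)"

lemma minsky_run_0 [simp]: "minsky_run M 0 = (1, 0, 0)"
  by (simp add: minsky_run_def)

lemma minsky_run_Suc: "minsky_run M (Suc k) = minsky_next M (minsky_run M k)"
  by (simp add: minsky_run_def)

lemma minsky_run_range:
  assumes "wf_minsky M"
  shows "1 \<le> fst (minsky_run M k) \<and> fst (minsky_run M k) \<le> mN M"
proof (induction k)
  case (Suc k)
  obtain q c where qc: "minsky_run M k = (q, c)"
    by (metis surj_pair)
  show ?case
  proof (cases "1 \<le> q \<and> q < mN M")
    case True
    then have "q - 1 < length M"
      by (auto simp: mN_def)
    with True assms show ?thesis
      unfolding minsky_run_Suc qc minsky_next_def wf_minsky_def by (cases "M ! (q - 1)") auto
  next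
    case False
    with Suc show ?thesis
      unfolding minsky_run_Suc qc minsky_next_def by auto
  qed
qed (simp add: mN_def)

lemma halts_iff_minsky_run:
  assumes "wf_minsky M"
  shows "halts M \<longleftrightarrow> (\<exists>k. fst (minsky_run M k) = mN M)"
proof
  assume "halts M"
  then obtain c where "(minsky_step M)\<^sup>*\<^sup>* (minsky_run M 0) (mN M, c)"
    unfolding halts_def by auto
  then have "\<exists>k. (mN M, c) = minsky_run M k"
  proof (induction rule: rtranclp_induct)
    case base
    then show ?case
      by blast
  next
    case (step cf cf')
    then show ?case
      by (metis minsky_step_iff minsky_run_Suc)
  qed
  then show "\<exists>k. fst (minsky_run M k) = mN M"
    by (metis fst_conv)
next
  assume "\<exists>k. fst (minsky_run M k) = mN M"
  define n where "n = (LEAST k. fst (minsky_run M k) = mN M)"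
  have n: "fst (minsky_run M n) = mN M"
    unfolding n_def using \<open>\<exists>k. fst (minsky_run M k) = mN M\<close> by (rule LeastI_ex)
  have before: "fst (minsky_run M k) < mN M" if "k < n" for k
    using not_less_Least[OF that[unfolded n_def]] minsky_run_range[OF assms, of k] n_def by auto
  have reach: "(minsky_step M)\<^sup>*\<^sup>* (1, 0, 0) (minsky_run M k)" if "k \<le> n" for k
    using that
  proof (induction k)
    case (Suc k)
    then have "minsky_step M (minsky_run M k) (minsky_run M (Suc k))"
      using before[of k] minsky_run_range[OF assms, of k] by (simp add: minsky_step_iff minsky_run_Suc)
    with Suc show ?case
      using rtranclp.rtrancl_into_rtrancl by fastforce
  qed simp
  show "halts M"
    using reach[OF order_refl] n unfolding halts_def by (cases "minsky_run M n") auto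
qed

section \<open>The product system\<close>

definition comp_state :: "(var \<Rightarrow> int) \<Rightarrow> nat \<times> nat \<times> nat \<Rightarrow> var \<Rightarrow> int" where
  "comp_state p cf = (\<lambda>v. case v of
     Q \<Rightarrow> int (fst cf) | C1 \<Rightarrow> int (fst (snd cf)) | C2 \<Rightarrow> int (snd (snd cf)) | _ \<Rightarrow> p v)"

lemma holds_TR_M:
  assumes "1 \<le> fst cf" "fst cf < mN M"
  shows "holds (case_primed (comp_state p cf) t) (TR_M M) \<longleftrightarrow>
    (\<forall>v\<in>{Q, C1, C2}. t v = comp_state p (minsky_next M cf) v)"
proof -
  obtain q c1 c2 where cf: "cf = (q, c1, c2)"
    by (metis prod.collapse)
  have "holds (case_primed (comp_state p cf) t) (TR_M M) \<longleftrightarrow>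
      holds (case_primed (comp_state p cf) t) (instr_fml q (M ! (q - 1)))"
    using assms unfolding TR_M_def cf by (auto simp: comp_state_def)
  also have "\<dots> \<longleftrightarrow> (\<forall>v\<in>{Q, C1, C2}. t v = comp_state p (minsky_next M cf) v)"
  proof (cases "M ! (q - 1)")
    case (Inc k)
    with assms show ?thesis
      unfolding cf by (cases k) (auto simp: comp_state_def minsky_next_def)
  next
    case (Dec k)
    with assms show ?thesis
      unfolding cf by (cases k) (auto simp: comp_state_def minsky_next_def of_nat_diff)
  next
    case (Tst k j)
    with assms show ?thesis
      unfolding cf by (cases k) (auto simp: comp_state_def minsky_next_def)
  qed
  finally show ?thesis .
qed

lemma prog_step_comp_state: "prog_step (comp_state p cf) = comp_state (prog_step p) cf"
  by (rule ext) (simp add: prog_step_def comp_state_def split: var.split)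

lemma comp_state_eq_iff:
  "t = comp_state p cf \<longleftrightarrow>
     (\<forall>v\<in>{PC, X, Z1, Z2, Y1, Y2}. t v = p v) \<and> (\<forall>v\<in>{Q, C1, C2}. t v = comp_state p cf v)"
proof -
  have vars: "UNIV = {PC, X, Z1, Z2, Y1, Y2} \<union> {Q, C1, C2}"
    using var.exhaust by blast
  have "t = comp_state p cf \<longleftrightarrow> (\<forall>v\<in>UNIV. t v = comp_state p cf v)"
    by (simp add: fun_eq_iff)
  also have "\<dots> \<longleftrightarrow>
      (\<forall>v\<in>{PC, X, Z1, Z2, Y1, Y2}. t v = p v) \<and> (\<forall>v\<in>{Q, C1, C2}. t v = comp_state p cf v)"
    unfolding vars by (auto simp: comp_state_def)
  finally show ?thesis .
qed

lemma holds_TR_comp: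
  assumes "0 \<le> p PC" "p PC \<le> 3" "1 \<le> fst cf" "fst cf \<le> mN M"
  shows "holds (case_primed (comp_state p cf) t) (TR_comp M) \<longleftrightarrow>
    fst cf < mN M \<and> t = comp_state (prog_step p) (minsky_next M cf)"
proof (cases "fst cf = mN M")
  case True
  then show ?thesis
    by (simp add: TR_comp_def comp_state_def)
next
  case False
  with assms have "fst cf < mN M"
    by simp
  moreover have "comp_state p cf PC = p PC"
    by (simp add: comp_state_def)
  ultimately show ?thesis
    using False assms holds_TR_prog[of "comp_state p cf" t] holds_TR_M[of cf M p t]
    by (simp add: TR_comp_def comp_state_eq_iff prog_step_comp_state) (simp add: comp_state_def)
qed

lemma holds_Init_comp: "holds s Init_comp \<longleftrightarrow> (\<exists>x\<ge>1. s = comp_state (prog_init x) (1, 0, 0))"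
proof
  assume "holds s Init_comp"
  then have "1 \<le> s X \<and> s = comp_state (prog_init (s X)) (1, 0, 0)"
    by (auto simp: Init_comp_def Init_prog_def comp_state_def prog_init_def fun_eq_iff split: var.split)
  then show "\<exists>x\<ge>1. s = comp_state (prog_init x) (1, 0, 0)"
    by blast
qed (auto simp: Init_comp_def Init_prog_def comp_state_def prog_init_def)

lemma prog_run_safe: "1 \<le> x \<Longrightarrow> holds (comp_state (prog_run x k) cf) P_prop"
  using prog_inv_prog_run[of x k] by (simp add: P_prop_def prog_inv_def comp_state_def)

section \<open>Halting machines: an explicit invariant\<close>

definition point_fml :: "(var \<Rightarrow> int) \<Rightarrow> var qf" where
  "point_fml p = foldr (\<lambda>v. FAnd (FEq (LVar v) (LConst (p v)))) [PC, X, Z1, Z2, Y1, Y2, C1, C2, Q] FTrue"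

lemma holds_point_fml: "holds s (point_fml p) \<longleftrightarrow> s = p"
proof -
  have eqs: "holds s (foldr (\<lambda>v. FAnd (FEq (LVar v) (LConst (p v)))) vs FTrue) \<longleftrightarrow> (\<forall>v\<in>set vs. s v = p v)"
    for vs
    by (induction vs) auto
  have vars: "set [PC, X, Z1, Z2, Y1, Y2, C1, C2, Q] = UNIV"
    using var.exhaust by auto
  show ?thesis
    unfolding point_fml_def eqs vars by (simp add: fun_eq_iff)
qed

definition loop1_fml :: "nat \<times> nat \<times> nat \<Rightarrow> nat \<Rightarrow> var qf" where
  "loop1_fml cf k =
     FAnd (FLe (LConst (max 1 (int k))) (LVar X))
    (FAnd (FEq (LVar PC) (LConst (if k = 0 then 0 else 1)))
    (FAnd (FEq (LVar Z1) (LAdd (LVar X) (LConst (- int k))))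
    (FAnd (FEq (LVar Z2) (LMul 2 (LVar X)))
    (FAnd (FEq (LVar Y1) (LMul (int k) (LVar X)))
    (FAnd (FEq (LVar Y2) (LConst 0))
    (FAnd (FEq (LVar Q) (LConst (int (fst cf))))
    (FAnd (FEq (LVar C1) (LConst (int (fst (snd cf)))))
          (FEq (LVar C2) (LConst (int (snd (snd cf))))))))))))"

lemma holds_loop1_fml:
  "holds s (loop1_fml cf k) \<longleftrightarrow> (\<exists>x\<ge>max 1 (int k). s = comp_state (loop1_state x k) cf)"
proof
  assume "holds s (loop1_fml cf k)"
  then have "max 1 (int k) \<le> s X \<and> s = comp_state (loop1_state (s X) k) cf"
    by (auto simp: loop1_fml_def comp_state_def loop1_state_def fun_eq_iff split: var.split)
  then show "\<exists>x\<ge>max 1 (int k). s = comp_state (loop1_state x k) cf"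
    by blast
qed (auto simp: loop1_fml_def comp_state_def loop1_state_def)

definition reach_fml :: "minsky \<Rightarrow> nat \<Rightarrow> var qf" where
  "reach_fml M k =
     FOr (loop1_fml (minsky_run M k) k)
       (FOrs (map (\<lambda>x. point_fml (comp_state (prog_run (int x) k) (minsky_run M k))) [1..<k]))"

lemma holds_reach_fml:
  "holds s (reach_fml M k) \<longleftrightarrow> (\<exists>x\<ge>1. s = comp_state (prog_run x k) (minsky_run M k))"
proof
  assume "holds s (reach_fml M k)"
  then consider x where "max 1 (int k) \<le> x" "s = comp_state (loop1_state x k) (minsky_run M k)"
    | x where "x \<in> {1..<k}" "s = comp_state (prog_run (int x) k) (minsky_run M k)"
    unfolding reach_fml_def by (auto simp: holds_loop1_fml holds_point_fml)
  then show "\<exists>x\<ge>1. s = comp_state (prog_run x k) (minsky_run M k)"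
  proof cases
    case (1 x)
    then show ?thesis
      using prog_run_loop1_state[of k x] by auto
  next
    case (2 x)
    then show ?thesis
      by (intro exI[of _ "int x"]) auto
  qed
next
  assume "\<exists>x\<ge>1. s = comp_state (prog_run x k) (minsky_run M k)"
  then obtain x where x: "1 \<le> x" "s = comp_state (prog_run x k) (minsky_run M k)"
    by blast
  show "holds s (reach_fml M k)"
  proof (cases "int k \<le> x")
    case True
    with x show ?thesis
      unfolding reach_fml_def by (auto simp: holds_loop1_fml prog_run_loop1_state)
  next
    case False
    with x have "nat x \<in> set [1..<k]" "s = comp_state (prog_run (int (nat x)) k) (minsky_run M k)"
      by auto
    then have "\<exists>c\<in>set [1..<k]. holds s (point_fml (comp_state (prog_run (int c) k) (minsky_run M k)))"
      by (intro bexI[of _ "nat x"]) (simp_all add: holds_point_fml)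
    then show ?thesis
      unfolding reach_fml_def by simp
  qed
qed

lemma invariant_if_halts_at:
  assumes "wf_minsky M" and halt: "fst (minsky_run M n) = mN M"
  shows "inductive_invariant Init_comp (TR_comp M) P_prop (FOrs (map (reach_fml M) [0..<Suc n]))"
    (is "inductive_invariant _ _ _ ?I")
proof -
  have I: "holds s ?I \<longleftrightarrow> (\<exists>k\<le>n. \<exists>x\<ge>1. s = comp_state (prog_run x k) (minsky_run M k))" for s
    by (auto simp: holds_reach_fml less_Suc_eq_le simp del: upt_Suc)
  have step: "holds t ?I"
    if "holds s ?I" "holds (case_primed s t) (TR_comp M)" for s t
  proof -
    from that(1) obtain k x where k: "k \<le> n" "1 \<le> x" and s: "s = comp_state (prog_run x k) (minsky_run M k)"
      unfolding I by blast
    have "0 \<le> prog_run x k PC" "prog_run x k PC \<le> 3"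
      using prog_inv_prog_run[OF k(2)] by (auto simp: prog_inv_def)
    with that(2) s minsky_run_range[OF assms(1), of k]
    have "fst (minsky_run M k) < mN M" "t = comp_state (prog_run x (Suc k)) (minsky_run M (Suc k))"
      by (simp_all add: holds_TR_comp prog_run_Suc minsky_run_Suc)
    moreover from this(1) halt k(1) have "Suc k \<le> n"
      by (metis le_neq_implies_less less_eq_Suc_le nat_less_le)
    ultimately show ?thesis
      using k(2) unfolding I by blast
  qed
  show ?thesis
    unfolding inductive_invariant_iff
  proof (intro conjI allI impI)
    fix s
    assume "holds s Init_comp"
    then show "holds s ?I"
      unfolding I holds_Init_comp by (metis le0 minsky_run_0 prog_run_0)
  next
    fix s
    assume "holds s ?I"
    then show "holds s P_prop"
      unfolding I using prog_run_safe by blast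
  qed (rule step)
qed

section \<open>Non-halting machines: no invariant\<close>

context
  fixes M :: minsky and I :: "var qf"
  assumes wf: "wf_minsky M" and not_halts: "\<not> halts M"
    and inv: "inductive_invariant Init_comp (TR_comp M) P_prop I"
begin

lemma invariant_closed_under_prog_steps:
  assumes "holds (comp_state p (minsky_run M k)) I" "0 \<le> p PC" "p PC \<le> 3"
  shows "holds (comp_state ((prog_step ^^ m) p) (minsky_run M (k + m))) I"
proof (induction m)
  case (Suc m)
  let ?p = "(prog_step ^^ m) p"
  have "fst (minsky_run M (k + m)) < mN M"
    using minsky_run_range[OF wf] not_halts halts_iff_minsky_run[OF wf] by (metis order_less_le)
  with funpow_prog_step_PC_range[of p m, OF assms(2,3)] minsky_run_range[OF wf, of "k + m"]
  have "holds (case_primed (comp_state ?p (minsky_run M (k + m)))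
      (comp_state (prog_step ?p) (minsky_run M (Suc (k + m))))) (TR_comp M)"
    by (simp add: holds_TR_comp minsky_run_Suc)
  with Suc inv show ?case
    unfolding inductive_invariant_iff by auto
qed (simp add: assms(1))

lemma reachable_in_invariant:
  assumes "1 \<le> x"
  shows "holds (comp_state (prog_run x k) (minsky_run M k)) I"
proof -
  have "holds (comp_state (prog_init x) (minsky_run M 0)) I"
    using inv assms unfolding inductive_invariant_iff holds_Init_comp by auto
  from invariant_closed_under_prog_steps[OF this, of k] show ?thesis
    by (simp add: prog_init_def prog_run_def)
qed

lemma bumped_not_in_invariant:
  assumes "1 \<le> x"
  shows "\<not> holds (comp_state (bump_Y1 (prog_run x k)) (minsky_run M k)) I"
proof
  assume bumped: "holds (comp_state (bump_Y1 (prog_run x k)) (minsky_run M k)) I"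
  obtain m where end_reached: "prog_run x (k + m) PC = 3"
    using prog_terminates[OF prog_inv_prog_run[OF assms]] prog_run_add by metis
  have "0 \<le> bump_Y1 (prog_run x k) PC" "bump_Y1 (prog_run x k) PC \<le> 3"
    using prog_inv_prog_run[OF assms, of k] by (auto simp: bump_Y1_def prog_inv_def)
  from invariant_closed_under_prog_steps[OF bumped this, of m]
  have "holds (comp_state (bump_Y1 (prog_run x (k + m))) (minsky_run M (k + m))) P_prop"
    using inv unfolding inductive_invariant_iff by (simp add: funpow_prog_step_bump_Y1 prog_run_add)
  with end_reached prog_inv_prog_run[OF assms, of "k + m"] show False
    by (simp add: P_prop_def prog_inv_def bump_Y1_def comp_state_def)
qed

end

lemma halts_if_invariant:
  assumes wf: "wf_minsky M" and inv: "inductive_invariant Init_comp (TR_comp M) P_prop I"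
  shows "halts M"
proof (rule ccontr)
  assume not_halts: "\<not> halts M"
  define \<alpha> :: "var \<Rightarrow> int" where "\<alpha> = (\<lambda>v. case v of X \<Rightarrow> 1 | Z1 \<Rightarrow> 1 | Z2 \<Rightarrow> 2 | _ \<Rightarrow> 0)"
  define \<beta> :: "var \<Rightarrow> int" where "\<beta> = (\<lambda>v. if v = Y1 then 1 else 0)"
  define \<gamma> where "\<gamma> = (\<lambda>k. comp_state (loop1_state 0 k) (minsky_run M k))"
  have good: "comp_state (loop1_state x k) (minsky_run M k) = (\<lambda>v. x * (\<alpha> v + int k * \<beta> v) + \<gamma> k v)"
    and bumped: "comp_state (bump_Y1 (loop1_state x k)) (minsky_run M k) =
      (\<lambda>v. x * (\<alpha> v + int k * \<beta> v) + \<gamma> k v + \<beta> v)" for x k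
    by (auto simp: \<alpha>_def \<beta>_def \<gamma>_def comp_state_def loop1_state_def bump_Y1_def fun_eq_iff split: var.split)
  have "cofinite \<noteq> (bot :: nat filter)"
    by simp
  then obtain k where "\<forall>\<^sub>F x in at_top.
      holds (\<lambda>v. x * (\<alpha> v + int k * \<beta> v) + \<gamma> k v + \<beta> v) I \<longleftrightarrow>
      holds (\<lambda>v. x * (\<alpha> v + int k * \<beta> v) + \<gamma> k v) I"
    using eventually_happens'[OF _ cofinite_eventually_holds_shift[of \<alpha> \<beta> \<gamma> I]] by blast
  from eventually_conj[OF eventually_ge_at_top this]
  have "\<forall>\<^sub>F x in at_top. max 1 (int k) \<le> x \<and>
      (holds (comp_state (bump_Y1 (loop1_state x k)) (minsky_run M k)) I \<longleftrightarrow>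
       holds (comp_state (loop1_state x k) (minsky_run M k)) I)"
    unfolding good bumped .
  then obtain x where x: "max 1 (int k) \<le> x" and
    same: "holds (comp_state (bump_Y1 (loop1_state x k)) (minsky_run M k)) I \<longleftrightarrow>
      holds (comp_state (loop1_state x k) (minsky_run M k)) I"
    using eventually_happens'[OF trivial_limit_at_top_linorder] by blast
  then have "1 \<le> x" "prog_run x k = loop1_state x k"
    by (simp_all add: prog_run_loop1_state)
  with reachable_in_invariant[OF wf not_halts inv] bumped_not_in_invariant[OF wf not_halts inv] same
  show False
    by metis
qed

theorem mainTheorem3:
  fixes M :: minsky
  assumes "wf_minsky M"
  shows "(\<exists>I :: var qf. inductive_invariant Init_comp (TR_comp M) P_prop I) \<longleftrightarrow> halts M"
proof
  assume "\<exists>I. inductive_invariant Init_comp (TR_comp M) P_prop I"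
  then show "halts M"
    using halts_if_invariant[OF assms] by blast
next
  assume "halts M"
  then obtain n where "fst (minsky_run M n) = mN M"
    using halts_iff_minsky_run[OF assms] by blast
  then show "\<exists>I. inductive_invariant Init_comp (TR_comp M) P_prop I"
    using invariant_if_halts_at[OF assms] by blast
qed

end
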